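(* Let $n\geq 4$ and $m>3$ be integers and let $\psi$ be an automorphism of $\mathcal{CSR}(m,n)$. Let $a\neq b$ in $[m]$ and let $\xi,\xi'$ be vertices. If $\psi(\xi+S_{ab})=\varsigma+S_{pq}$ and $\psi(\xi'+S_{ab})=\varsigma'+S_{rs}$ for some vertices $\varsigma,\varsigma'$ and some $p\neq q$, $r\neq s$ in $[m]$, then $\{p,q\}=\{r,s\}$.
   Context: For positive integers $m,n$, the cyclic simplicial rook graph $\mathcal{CSR}(m,n)$ is the graph whose vertices are the vectors $(a_1,\dots,a_m)\in\mathbb{Z}_n^m$ with $a_1+\cdots+a_m\equiv 0 \pmod n$, two vertices being adjacent if and only if their vectors differ in exactly two coordinates. $[m]=\{1,\dots,m\}$; $e_i\in\mathbb{Z}_n^m$ is the vector with $1$ in coordinate $i$ and $0$ elsewhere; for distinct $a,b\in[m]$, $S_{ab}=\{\alpha(e_a-e_b)\mid \alpha\in\mathbb{Z}_n\}$; and $x+A=\{x+y\mid y\in A\}$. *)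

theory Defs
  imports Main
begin

text \<open>Vectors of Z_n^m are represented as functions nat => int with values in
{0..<n} on the index set [m] = {1..m} and value 0 outside [m].
All arithmetic is taken mod n.\<close>

definition csr_verts :: "nat \<Rightarrow> nat \<Rightarrow> (nat \<Rightarrow> int) set" where
  "csr_verts m n = {x. (\<forall>i\<in>{1..m}. x i \<in> {0..<int n}) \<and> (\<forall>i. i \<notin> {1..m} \<longrightarrow> x i = 0)
                      \<and> (\<Sum>i\<in>{1..m}. x i) mod int n = 0}"

definition csr_adj :: "nat \<Rightarrow> (nat \<Rightarrow> int) \<Rightarrow> (nat \<Rightarrow> int) \<Rightarrow> bool" where
  "csr_adj m x y \<longleftrightarrow> card {i\<in>{1..m}. x i \<noteq> y i} = 2"

definition csr_aut :: "nat \<Rightarrow> nat \<Rightarrow> ((nat \<Rightarrow> int) \<Rightarrow> (nat \<Rightarrow> int)) \<Rightarrow> bool" where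
  "csr_aut m n \<psi> \<longleftrightarrow> bij_betw \<psi> (csr_verts m n) (csr_verts m n) \<and>
     (\<forall>x\<in>csr_verts m n. \<forall>y\<in>csr_verts m n. csr_adj m (\<psi> x) (\<psi> y) \<longleftrightarrow> csr_adj m x y)"

definition unitv :: "nat \<Rightarrow> nat \<Rightarrow> int" ("e\<^sub>_") where
  "unitv i = (\<lambda>j. if j = i then 1 else 0)"

definition vadd :: "nat \<Rightarrow> (nat \<Rightarrow> int) \<Rightarrow> (nat \<Rightarrow> int) \<Rightarrow> (nat \<Rightarrow> int)" where
  "vadd n x y = (\<lambda>i. (x i + y i) mod int n)"

definition S_set :: "nat \<Rightarrow> nat \<Rightarrow> nat \<Rightarrow> (nat \<Rightarrow> int) set" where
  "S_set n a b = {(\<lambda>i. (\<alpha> * (unitv a i - unitv b i)) mod int n) | \<alpha>. \<alpha> \<in> {0..<int n}}"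

definition coset :: "nat \<Rightarrow> (nat \<Rightarrow> int) \<Rightarrow> (nat \<Rightarrow> int) set \<Rightarrow> (nat \<Rightarrow> int) set" where
  "coset n x A = vadd n x ` A"

end

theory Submission
  imports Defs
begin

text \<open>
  The coset \<open>x + S\<^sub>a\<^sub>b\<close> is the line of all vertices that differ from \<open>x\<close> only in
  the coordinates \<open>a\<close> and \<open>b\<close>; it is a clique with \<open>n\<close> vertices. Call a vertex \<open>y\<close> good if
  \<open>\<psi>\<close> maps the \<open>{a,b}\<close>-line through \<open>y\<close> onto the \<open>{p,q}\<close>-line through \<open>\<psi> y\<close>.
  A vertex adjacent to three points of a line lies on that line, so by counting, a line is mapped
  onto a line as soon as three of its points are. Goodness propagates along the moves
  \<open>y \<mapsto> y + s(e\<^sub>c - e\<^sub>a)\<close> with \<open>c \<notin> {a,b}\<close>: tracking in which coordinates the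
  images of neighbours of \<open>y\<close> leave the \<open>{p,q}\<close>-line through \<open>\<psi> y\<close> shows that three
  points of the new \<open>{a,b}\<close>-line land on one \<open>{p,q}\<close>-line. Such moves connect all vertices, so \<open>\<xi>'\<close> is good,
  and then the image of its \<open>{a,b}\<close>-line is both the \<open>{p,q}\<close>- and the \<open>{r,s}\<close>-line
  through \<open>\<psi> \<xi>'\<close>, which forces \<open>{p,q} = {r,s}\<close>.
\<close>

section \<open>Lines and moves\<close>

definition diff_coords :: "nat \<Rightarrow> (nat \<Rightarrow> int) \<Rightarrow> (nat \<Rightarrow> int) \<Rightarrow> nat set" where
  "diff_coords m x y = {i \<in> {1..m}. x i \<noteq> y i}"

definition csr_line :: "nat \<Rightarrow> nat \<Rightarrow> (nat \<Rightarrow> int) \<Rightarrow> nat set \<Rightarrow> (nat \<Rightarrow> int) set" where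
  "csr_line m n x P = {z \<in> csr_verts m n. diff_coords m x z \<subseteq> P}"

text \<open>\<open>move n x i j t\<close> is \<open>x + (t - x\<^sub>i)(e\<^sub>i - e\<^sub>j)\<close>, reduced mod \<open>n\<close>.\<close>
definition move :: "nat \<Rightarrow> (nat \<Rightarrow> int) \<Rightarrow> nat \<Rightarrow> nat \<Rightarrow> int \<Rightarrow> (nat \<Rightarrow> int)" where
  "move n x i j t = x(i := t, j := (x j + x i - t) mod int n)"

lemma mem_diff_coords: "i \<in> diff_coords m x y \<longleftrightarrow> i \<in> {1..m} \<and> x i \<noteq> y i"
  by (simp add: diff_coords_def)

lemma diff_coords_commute: "diff_coords m x y = diff_coords m y x"
  by (auto simp: diff_coords_def)

lemma diff_coords_triangle: "diff_coords m x z \<subseteq> diff_coords m x y \<union> diff_coords m y z"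
  by (auto simp: diff_coords_def)

lemma diff_coords_minus_subset: "diff_coords m x y - diff_coords m x z \<subseteq> diff_coords m y z"
  by (auto simp: diff_coords_def)

lemma finite_diff_coords [simp]: "finite (diff_coords m x y)"
  by (simp add: diff_coords_def)

lemma csr_adj_iff_card: "csr_adj m x y \<longleftrightarrow> card (diff_coords m x y) = 2"
  by (simp add: csr_adj_def diff_coords_def)

lemma csr_adjE:
  assumes "csr_adj m x y"
  obtains i j where "i \<noteq> j" "diff_coords m x y = {i, j}"
  using assms unfolding csr_adj_iff_card card_2_iff by blast

lemma csr_adj_diff_coords_eq:
  assumes "csr_adj m x y" "i \<in> diff_coords m x y" "j \<in> diff_coords m x y" "i \<noteq> j"
  shows "diff_coords m x y = {i, j}"
  using assms by (auto simp: csr_adj_iff_card card_2_iff)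

lemma not_csr_adj_if_three_diffs:
  assumes "{i, j, k} \<subseteq> diff_coords m x y" "i \<noteq> j" "j \<noteq> k" "i \<noteq> k"
  shows "\<not> csr_adj m x y"
proof -
  have "card {i, j, k} \<le> card (diff_coords m x y)"
    using assms(1) by (rule card_mono[OF finite_diff_coords])
  then show ?thesis using assms by (simp add: csr_adj_iff_card)
qed

lemma csr_adj_if_diff_coords_eq: "diff_coords m x y = {i, j} \<Longrightarrow> i \<noteq> j \<Longrightarrow> csr_adj m x y"
  by (simp add: csr_adj_iff_card)

lemma csr_vert_range: "x \<in> csr_verts m n \<Longrightarrow> i \<in> {1..m} \<Longrightarrow> 0 \<le> x i \<and> x i < int n"
  by (auto simp: csr_verts_def)

lemma csr_vert_outside: "x \<in> csr_verts m n \<Longrightarrow> i \<notin> {1..m} \<Longrightarrow> x i = 0"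
  by (auto simp: csr_verts_def)

lemma csr_vert_mod: "x \<in> csr_verts m n \<Longrightarrow> x i mod int n = x i"
  by (cases "i \<in> {1..m}") (auto simp: csr_vert_range csr_vert_outside)

lemma csr_vert_sum: "x \<in> csr_verts m n \<Longrightarrow> (\<Sum>i\<in>{1..m}. x i) mod int n = 0"
  by (auto simp: csr_verts_def)

lemma csr_verts_agree_outside:
  assumes "x \<in> csr_verts m n" "y \<in> csr_verts m n" "diff_coords m x y \<subseteq> P" "l \<notin> P"
  shows "x l = y l"
  using assms csr_vert_outside[of x m n l] csr_vert_outside[of y m n l]
  by (cases "l \<in> {1..m}") (auto simp: diff_coords_def)

lemma csr_verts_eq_iff:
  assumes "x \<in> csr_verts m n" "y \<in> csr_verts m n"
  shows "x = y \<longleftrightarrow> diff_coords m x y = {}"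
  using csr_verts_agree_outside[OF assms, of "{}"] by (auto simp: diff_coords_def)

lemma self_in_csr_line: "x \<in> csr_verts m n \<Longrightarrow> x \<in> csr_line m n x P"
  by (simp add: csr_line_def diff_coords_def)

lemma csr_line_commute: "y \<in> csr_line m n x P \<Longrightarrow> x \<in> csr_verts m n \<Longrightarrow> x \<in> csr_line m n y P"
  by (simp add: csr_line_def diff_coords_commute)

lemma csr_line_eq_if_mem:
  assumes "x \<in> csr_verts m n" "z \<in> csr_line m n x P"
  shows "csr_line m n z P = csr_line m n x P"
  using assms diff_coords_triangle[of m x _ z] diff_coords_triangle[of m z _ x] diff_coords_commute[of m x z]
  unfolding csr_line_def by blast

lemma move_same: "i \<noteq> j \<Longrightarrow> move n x i j t i = t"
  by (simp add: move_def)

lemma move_compensate: "move n x i j t j = (x j + x i - t) mod int n"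
  by (simp add: move_def)

lemma move_other: "l \<noteq> i \<Longrightarrow> l \<noteq> j \<Longrightarrow> move n x i j t l = x l"
  by (simp add: move_def)

lemma diff_coords_move_subset: "diff_coords m x (move n x i j t) \<subseteq> {i, j}"
  by (auto simp: diff_coords_def move_def)

lemma move_move:
  assumes "i \<noteq> j"
  shows "move n (move n x i j s) i j t = move n x i j t"
proof -
  have "((x j + x i - s) mod int n + s - t) mod int n = (x j + x i - s + s - t) mod int n"
    by (metis add_diff_eq mod_add_left_eq)
  then show ?thesis using assms by (simp add: move_def)
qed

lemma off_line_common_neighbour:
  assumes YV: "diff_coords m Y V = {p, q}" and pq: "p \<noteq> q"
    and YU: "csr_adj m Y U" and VU: "csr_adj m V U" and off: "\<not> diff_coords m Y U \<subseteq> {p, q}"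
  obtains i k where "i \<in> {p, q}" "k \<notin> {p, q}" "diff_coords m Y U = {i, k}" "U i = V i"
proof -
  have from_V: "diff_coords m Y V - diff_coords m Y U \<subseteq> diff_coords m V U"
    by (rule diff_coords_minus_subset)
  have from_U: "diff_coords m Y U - diff_coords m Y V \<subseteq> diff_coords m V U"
    using diff_coords_minus_subset[of m Y U V] diff_coords_commute[of m U V] by simp
  have agree: "U i = V i" if D: "diff_coords m Y U = {i, k}" and i: "i \<in> {p, q}" and k: "k \<notin> {p, q}"
    for i k
  proof (rule ccontr)
    assume "U i \<noteq> V i"
    obtain i' where i': "{p, q} = {i, i'}" "i' \<noteq> i" using i pq by blast
    have "i \<in> diff_coords m V U" using D \<open>U i \<noteq> V i\<close> by (auto simp: mem_diff_coords)
    moreover have "i' \<in> diff_coords m V U" using from_V YV D i' k by blast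
    moreover have "k \<in> diff_coords m V U" using from_U YV D k by blast
    ultimately show False using not_csr_adj_if_three_diffs[of i i' k] VU i' i k by blast
  qed
  obtain i j where ij: "i \<noteq> j" "diff_coords m Y U = {i, j}" using YU by (rule csr_adjE)
  consider "i \<in> {p, q}" "j \<notin> {p, q}" | "j \<in> {p, q}" "i \<notin> {p, q}" | "i \<notin> {p, q}" "j \<notin> {p, q}"
    using off ij by blast
  then show thesis
  proof cases
    case 1
    then show thesis using that agree ij(2) by blast
  next
    case 2
    moreover have "diff_coords m Y U = {j, i}" using ij(2) by blast
    ultimately show thesis using that agree by blast
  next
    case 3
    then have "{p, q} \<subseteq> diff_coords m Y V - diff_coords m Y U" "i \<in> diff_coords m Y U - diff_coords m Y V"
      using YV ij(2) by auto
    then have "{p, q, i} \<subseteq> diff_coords m V U" using from_V from_U by blast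
    then show thesis using not_csr_adj_if_three_diffs[of p q i] VU pq 3(1) by blast
  qed
qed

lemma adj_neighbours_distinct_pivots:
  assumes AB: "csr_adj m A B" and A: "diff_coords m Y A = {i, k}" and B: "diff_coords m Y B = {j, l}"
    and "i \<noteq> j" "i \<noteq> k" "i \<noteq> l" "j \<noteq> k" "j \<noteq> l"
  shows "l = k \<and> diff_coords m A B = {i, j}"
proof -
  have from_A: "{i, k} - {j, l} \<subseteq> diff_coords m A B"
    using diff_coords_minus_subset[of m Y A B] unfolding A B .
  have from_B: "{j, l} - {i, k} \<subseteq> diff_coords m A B"
    using diff_coords_minus_subset[of m Y B A] diff_coords_commute[of m A B] unfolding A B by simp
  have "i \<in> diff_coords m A B" "j \<in> diff_coords m A B"
    using from_A from_B assms(4-) by auto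
  then have AB_eq: "diff_coords m A B = {i, j}" by (rule csr_adj_diff_coords_eq[OF AB _ _ assms(4)])
  have "l = k"
  proof (rule ccontr)
    assume "l \<noteq> k"
    then have "k \<in> diff_coords m A B" using from_A assms(7) by auto
    then show False using AB_eq assms(5,7) by auto
  qed
  with AB_eq show ?thesis by blast
qed

lemma adj_neighbours_same_pivot:
  assumes AB: "csr_adj m A B" and A: "diff_coords m Y A = {i, k}" and B: "diff_coords m Y B = {i, l}"
    and "A i \<noteq> B i" "i \<noteq> k" "i \<noteq> l"
  shows "l = k"
proof (rule ccontr)
  assume "l \<noteq> k"
  have "i \<in> diff_coords m A B" using A assms(4) by (auto simp: mem_diff_coords)
  moreover have "k \<in> diff_coords m A B"
    using diff_coords_minus_subset[of m Y A B] \<open>l \<noteq> k\<close> assms(5) unfolding A B by auto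
  moreover have "l \<in> diff_coords m A B"
    using diff_coords_minus_subset[of m Y B A] diff_coords_commute[of m A B] \<open>l \<noteq> k\<close> assms(6)
    unfolding A B by auto
  ultimately show False
    using not_csr_adj_if_three_diffs[of i k l] AB \<open>l \<noteq> k\<close> assms(5,6) by blast
qed

locale csr_graph =
  fixes m n :: nat
  assumes n_pos: "0 < n"
begin

lemma diff_coords_neq_singleton:
  assumes x: "x \<in> csr_verts m n" and y: "y \<in> csr_verts m n"
  shows "diff_coords m x y \<noteq> {i}"
proof
  assume D: "diff_coords m x y = {i}"
  have i: "i \<in> {1..m}" "x i \<noteq> y i" using mem_diff_coords[of i m x y] D by simp_all
  have "x l = y l" if "l \<in> {1..m} - {i}" for l using mem_diff_coords[of l m x y] D that by simp
  then have "(\<Sum>l\<in>{1..m}. y l - x l) = (\<Sum>l\<in>{i}. y l - x l)"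
    by (intro sum.mono_neutral_right) (use i in auto)
  then have "y i - x i = (\<Sum>l\<in>{1..m}. y l) - (\<Sum>l\<in>{1..m}. x l)"
    by (simp add: sum_subtractf)
  also have "int n dvd \<dots>"
    using mod_0_imp_dvd[OF csr_vert_sum[OF y]] mod_0_imp_dvd[OF csr_vert_sum[OF x]] by (rule dvd_diff)
  finally have "int n \<le> \<bar>y i - x i\<bar>" using i(2) dvd_imp_le_int[of "y i - x i" "int n"] by simp
  moreover have "\<bar>y i - x i\<bar> < int n" using csr_vert_range[OF x i(1)] csr_vert_range[OF y i(1)] by auto
  ultimately show False by simp
qed

lemma diff_coords_eq_pairI:
  assumes "x \<in> csr_verts m n" "y \<in> csr_verts m n" "diff_coords m x y \<subseteq> {i, j}" "x \<noteq> y"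
  shows "diff_coords m x y = {i, j}"
proof -
  have "diff_coords m x y \<noteq> {}" "diff_coords m x y \<noteq> {i}" "diff_coords m x y \<noteq> {j}"
    using assms csr_verts_eq_iff diff_coords_neq_singleton by blast+
  then show ?thesis using assms(3) by blast
qed

lemma diff_coords_eq_if_csr_line:
  assumes "x \<in> csr_verts m n" "y \<in> csr_line m n x {i, j}" "y \<noteq> x"
  shows "diff_coords m x y = {i, j}"
  using diff_coords_eq_pairI[of x y i j] assms by (auto simp: csr_line_def)

lemma csr_adj_if_diff_coords_subset:
  assumes "x \<in> csr_verts m n" "y \<in> csr_verts m n" "diff_coords m x y \<subseteq> {i, j}" "x \<noteq> y" "i \<noteq> j"
  shows "csr_adj m x y"
  using diff_coords_eq_pairI[OF assms(1-4)] assms(5) by (simp add: csr_adj_iff_card)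

lemma csr_adj_if_same_line:
  assumes "y \<in> csr_line m n x {i, j}" "z \<in> csr_line m n x {i, j}" "y \<noteq> z" "i \<noteq> j"
  shows "csr_adj m y z"
proof (rule csr_adj_if_diff_coords_subset)
  show "diff_coords m y z \<subseteq> {i, j}"
    using assms(1,2) diff_coords_triangle[of m y z x] diff_coords_commute[of m x y]
    by (auto simp: csr_line_def)
qed (use assms in \<open>auto simp: csr_line_def\<close>)

lemma csr_line_coord_inj:
  assumes y: "y \<in> csr_line m n x {i, j}" and z: "z \<in> csr_line m n x {i, j}" and "y i = z i"
  shows "y = z"
proof -
  have "diff_coords m y z \<subseteq> {i, j}"
    using y z diff_coords_triangle[of m y z x] diff_coords_commute[of m x y]
    by (auto simp: csr_line_def)
  moreover have "i \<notin> diff_coords m y z" using \<open>y i = z i\<close> by (simp add: mem_diff_coords)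
  ultimately have "diff_coords m y z \<subseteq> {j}" by blast
  then show ?thesis
    using y z csr_verts_eq_iff diff_coords_neq_singleton
    by (metis csr_line_def mem_Collect_eq subset_singletonD)
qed

lemma move_in_csr_line:
  assumes x: "x \<in> csr_verts m n" and ij: "i \<in> {1..m}" "j \<in> {1..m}" "i \<noteq> j"
    and t: "t \<in> {0..<int n}"
  shows "move n x i j t \<in> csr_line m n x {i, j}"
proof -
  let ?y = "move n x i j t" and ?r = "x j + x i - t"
  have "(\<Sum>l\<in>{1..m}. ?y l - x l) = (\<Sum>l\<in>{i, j}. ?y l - x l)"
    by (rule sum.mono_neutral_right) (use ij in \<open>auto simp: move_other\<close>)
  also have "\<dots> = ?r mod int n - ?r"
    using ij(3) by (simp add: move_same move_compensate)
  finally have "(\<Sum>l\<in>{1..m}. ?y l) = (\<Sum>l\<in>{1..m}. x l) + (?r mod int n - ?r)"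
    by (simp add: sum_subtractf algebra_simps)
  moreover have "int n dvd (\<Sum>l\<in>{1..m}. x l)" using csr_vert_sum[OF x] by (rule mod_0_imp_dvd)
  moreover have "int n dvd ?r mod int n - ?r" by (metis dvd_minus_iff dvd_minus_mod minus_diff_eq)
  ultimately have "(\<Sum>l\<in>{1..m}. ?y l) mod int n = 0" by simp
  moreover have "?y l \<in> {0..<int n}" if "l \<in> {1..m}" for l
    using that t n_pos csr_vert_range[OF x] by (auto simp: move_def)
  moreover have "?y l = 0" if "l \<notin> {1..m}" for l
    using that ij csr_vert_outside[OF x] by (auto simp: move_def)
  ultimately show ?thesis
    using diff_coords_move_subset by (simp add: csr_line_def csr_verts_def)
qed

lemma diff_coords_move:
  assumes x: "x \<in> csr_verts m n" and ij: "i \<in> {1..m}" "j \<in> {1..m}" "i \<noteq> j"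
    and t: "t \<in> {0..<int n}" "t \<noteq> x i"
  shows "diff_coords m x (move n x i j t) = {i, j}"
proof (rule diff_coords_eq_pairI[OF x])
  show "move n x i j t \<in> csr_verts m n" "diff_coords m x (move n x i j t) \<subseteq> {i, j}"
    using move_in_csr_line[OF x ij t(1)] by (simp_all add: csr_line_def)
  show "x \<noteq> move n x i j t" using move_same[OF ij(3), of n x t] t(2) by auto
qed

lemma adj_move_to_neighbour:
  assumes y: "y \<in> csr_verts m n" and z: "z \<in> csr_verts m n" "diff_coords m y z = {e, c}"
    and f: "f \<in> {1..m}" "f \<noteq> e" "f \<noteq> c"
  shows "csr_adj m (move n y e f (z e)) z"
proof -
  let ?v = "move n y e f (z e)"
  have e: "e \<in> {1..m}" and z_c: "z c \<noteq> y c"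
    using mem_diff_coords[of e m y z] mem_diff_coords[of c m y z] z(2) by auto
  have ec: "e \<noteq> c" using diff_coords_neq_singleton[OF y z(1), of e] z(2) by auto
  have v_line: "?v \<in> csr_line m n y {e, f}"
    using move_in_csr_line[OF y e f(1) f(2)[symmetric]] csr_vert_range[OF z(1) e] by simp
  have "diff_coords m ?v z \<subseteq> {e, f, c}"
    using diff_coords_triangle[of m ?v z y] diff_coords_commute[of m y ?v] z(2) v_line
    by (auto simp: csr_line_def)
  moreover have "e \<notin> diff_coords m ?v z" using f(2) by (simp add: mem_diff_coords move_same)
  ultimately have "diff_coords m ?v z \<subseteq> {f, c}" by blast
  moreover have "?v \<noteq> z" using z_c f(3) ec by (metis move_other)
  moreover have "?v \<in> csr_verts m n" using v_line by (simp add: csr_line_def)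
  ultimately show ?thesis using csr_adj_if_diff_coords_subset z(1) f(3) by blast
qed

lemma csr_line_eq_image_move:
  assumes x: "x \<in> csr_verts m n" and ij: "i \<in> {1..m}" "j \<in> {1..m}" "i \<noteq> j"
  shows "csr_line m n x {i, j} = move n x i j ` {0..<int n}"
proof
  show "move n x i j ` {0..<int n} \<subseteq> csr_line m n x {i, j}"
    using move_in_csr_line[OF assms] by blast
  show "csr_line m n x {i, j} \<subseteq> move n x i j ` {0..<int n}"
  proof
    fix z assume z: "z \<in> csr_line m n x {i, j}"
    then have zi: "z i \<in> {0..<int n}" using csr_vert_range ij(1) by (auto simp: csr_line_def)
    have "z = move n x i j (z i)"
      using csr_line_coord_inj[OF z move_in_csr_line[OF assms zi]] move_same[OF ij(3)] by simp
    then show "z \<in> move n x i j ` {0..<int n}" using zi by blast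
  qed
qed

lemma card_csr_line:
  assumes "x \<in> csr_verts m n" "i \<in> {1..m}" "j \<in> {1..m}" "i \<noteq> j"
  shows "card (csr_line m n x {i, j}) = n"
proof -
  have "inj_on (move n x i j) {0..<int n}" by (rule inj_onI) (metis assms(4) move_same)
  then show ?thesis by (simp add: csr_line_eq_image_move[OF assms] card_image)
qed

lemma vadd_S_point_eq_move:
  assumes "x \<in> csr_verts m n" "a \<noteq> b"
  shows "vadd n x (\<lambda>i. (\<alpha> * (unitv a i - unitv b i)) mod int n) = move n x a b ((x a + \<alpha>) mod int n)"
proof
  fix i
  have "(x b + x a - (x a + \<alpha>) mod int n) mod int n = (x b + - \<alpha>) mod int n"
    by (simp add: mod_diff_right_eq)
  then show "vadd n x (\<lambda>i. (\<alpha> * (unitv a i - unitv b i)) mod int n) i = move n x a b ((x a + \<alpha>) mod int n) i"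
    using assms csr_vert_mod[OF assms(1)]
    by (auto simp: vadd_def unitv_def move_def mod_add_right_eq)
qed

lemma coset_eq_csr_line:
  assumes x: "x \<in> csr_verts m n" and ab: "a \<in> {1..m}" "b \<in> {1..m}" "a \<noteq> b"
  shows "coset n x (S_set n a b) = csr_line m n x {a, b}"
proof -
  have "coset n x (S_set n a b) = move n x a b ` (\<lambda>\<alpha>. (x a + \<alpha>) mod int n) ` {0..<int n}"
    unfolding coset_def S_set_def Setcompr_eq_image image_image
    using vadd_S_point_eq_move[OF x ab(3)] by simp
  also have "(\<lambda>\<alpha>. (x a + \<alpha>) mod int n) ` {0..<int n} = {0..<int n}"
  proof
    show "(\<lambda>\<alpha>. (x a + \<alpha>) mod int n) ` {0..<int n} \<subseteq> {0..<int n}" using n_pos by auto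
    show "{0..<int n} \<subseteq> (\<lambda>\<alpha>. (x a + \<alpha>) mod int n) ` {0..<int n}"
    proof
      fix t assume "t \<in> {0..<int n}"
      then have "t = (x a + (t - x a) mod int n) mod int n" by (simp add: mod_add_right_eq)
      then show "t \<in> (\<lambda>\<alpha>. (x a + \<alpha>) mod int n) ` {0..<int n}" using n_pos by force
    qed
  qed
  finally show ?thesis by (simp add: csr_line_eq_image_move[OF assms])
qed

lemma csr_line_if_adj_three:
  assumes W: "W \<in> csr_verts m n" and X: "X \<in> csr_verts m n"
    and V: "V1 \<in> csr_line m n W {p, q}" "V2 \<in> csr_line m n W {p, q}"
    and ne: "V1 \<noteq> V2" "V1 \<noteq> W" "V2 \<noteq> W" and pq: "p \<noteq> q"
    and adj: "csr_adj m W X" "csr_adj m V1 X" "csr_adj m V2 X"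
  shows "X \<in> csr_line m n W {p, q}"
proof (rule ccontr)
  assume "X \<notin> csr_line m n W {p, q}"
  then have off: "\<not> diff_coords m W X \<subseteq> {p, q}" using X by (simp add: csr_line_def)
  have D: "diff_coords m W V1 = {p, q}" "diff_coords m W V2 = {p, q}"
    using diff_coords_eq_if_csr_line[OF W] V ne by blast+
  obtain i k where 1: "i \<in> {p, q}" "k \<notin> {p, q}" "diff_coords m W X = {i, k}" "X i = V1 i"
    using off_line_common_neighbour[OF D(1) pq adj(1,2) off] .
  obtain i' k' where 2: "i' \<in> {p, q}" "k' \<notin> {p, q}" "diff_coords m W X = {i', k'}" "X i' = V2 i'"
    using off_line_common_neighbour[OF D(2) pq adj(1,3) off] .
  have "i' = i" using 1 2 by blast
  obtain j where "{p, q} = {i, j}" using 1(1) by blast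
  then have "V1 = V2" using csr_line_coord_inj[of V1 W i j V2] V 1(4) 2(4) \<open>i' = i\<close> by simp
  then show False using ne(1) by contradiction
qed

lemma csr_line_pair_eq:
  assumes n: "2 \<le> n" and x: "x \<in> csr_verts m n" and ij: "i \<in> {1..m}" "j \<in> {1..m}" "i \<noteq> j"
    and eq: "csr_line m n x {i, j} = csr_line m n x {k, l}"
  shows "{i, j} = {k, l}"
proof -
  define t where "t = (x i + 1) mod int n"
  have xi: "0 \<le> x i" "x i < int n" using csr_vert_range[OF x ij(1)] by auto
  have "t \<noteq> x i"
  proof (cases "x i + 1 < int n")
    case True
    then show ?thesis using xi by (simp add: t_def)
  next
    case False
    then have "x i + 1 = int n" using xi by linarith
    then show ?thesis using n by (simp add: t_def)
  qed
  moreover have "t \<in> {0..<int n}" using n by (simp add: t_def)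
  ultimately have t: "t \<in> {0..<int n}" "t \<noteq> x i" by blast+
  have "move n x i j t \<in> csr_line m n x {k, l}" using move_in_csr_line[OF x ij t(1)] eq by simp
  then have "{i, j} \<subseteq> {k, l}" using diff_coords_move[OF x ij t] by (simp add: csr_line_def)
  then show ?thesis using ij(3) by blast
qed

end

section \<open>Images of lines under an automorphism\<close>

locale csr_automorphism = csr_graph +
  fixes \<psi> :: "(nat \<Rightarrow> int) \<Rightarrow> nat \<Rightarrow> int"
  assumes aut: "csr_aut m n \<psi>"
begin

lemma psi_vert: "x \<in> csr_verts m n \<Longrightarrow> \<psi> x \<in> csr_verts m n"
  using aut unfolding csr_aut_def bij_betw_def by blast

lemma inj_on_psi: "inj_on \<psi> (csr_verts m n)"
  using aut unfolding csr_aut_def bij_betw_def by blast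

lemma psi_eq_iff: "x \<in> csr_verts m n \<Longrightarrow> y \<in> csr_verts m n \<Longrightarrow> \<psi> x = \<psi> y \<longleftrightarrow> x = y"
  using inj_on_psi by (auto dest: inj_onD)

lemma psi_adj_iff:
  "x \<in> csr_verts m n \<Longrightarrow> y \<in> csr_verts m n \<Longrightarrow> csr_adj m (\<psi> x) (\<psi> y) \<longleftrightarrow> csr_adj m x y"
  using aut unfolding csr_aut_def by blast

lemma image_csr_line_eq_if_three:
  assumes x: "x \<in> csr_verts m n" and ab: "a \<in> {1..m}" "b \<in> {1..m}" "a \<noteq> b"
    and pq: "p \<in> {1..m}" "q \<in> {1..m}" "p \<noteq> q"
    and w: "w \<in> csr_line m n x {a, b}" "w' \<in> csr_line m n x {a, b}" "w \<noteq> w'" "w \<noteq> x" "w' \<noteq> x"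
    and img: "\<psi> w \<in> csr_line m n (\<psi> x) {p, q}" "\<psi> w' \<in> csr_line m n (\<psi> x) {p, q}"
  shows "\<psi> ` csr_line m n x {a, b} = csr_line m n (\<psi> x) {p, q}"
proof (rule card_subset_eq)
  have line_verts: "csr_line m n x {a, b} \<subseteq> csr_verts m n" by (auto simp: csr_line_def)
  have x_line: "x \<in> csr_line m n x {a, b}" using x by (rule self_in_csr_line)
  show "finite (csr_line m n (\<psi> x) {p, q})"
    using card_csr_line[OF psi_vert[OF x] pq] n_pos by (metis card_ge_0_finite)
  show "card (\<psi> ` csr_line m n x {a, b}) = card (csr_line m n (\<psi> x) {p, q})"
    using card_image[OF inj_on_subset[OF inj_on_psi line_verts]]
      card_csr_line[OF x ab] card_csr_line[OF psi_vert[OF x] pq] by simp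
  show "\<psi> ` csr_line m n x {a, b} \<subseteq> csr_line m n (\<psi> x) {p, q}"
  proof (rule image_subsetI)
    fix z assume z: "z \<in> csr_line m n x {a, b}"
    then have zV: "z \<in> csr_verts m n" by (simp add: csr_line_def)
    show "\<psi> z \<in> csr_line m n (\<psi> x) {p, q}"
    proof (cases "z \<in> {x, w, w'}")
      case True
      then show ?thesis using img self_in_csr_line[OF psi_vert[OF x]] by auto
    next
      case False
      have adj: "csr_adj m (\<psi> u) (\<psi> z)" if "u \<in> {x, w, w'}" for u
      proof -
        have u: "u \<in> csr_line m n x {a, b}" using that x_line w by auto
        then have "csr_adj m u z" using csr_adj_if_same_line[OF u z] False that ab(3) by blast
        then show ?thesis using psi_adj_iff u zV line_verts by blast
      qed
      have "\<psi> w \<noteq> \<psi> w'" "\<psi> w \<noteq> \<psi> x" "\<psi> w' \<noteq> \<psi> x"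
        using psi_eq_iff w x line_verts by blast+
      then show ?thesis
        using csr_line_if_adj_three[OF psi_vert[OF x] psi_vert[OF zV] img] adj pq(3) by blast
    qed
  qed
qed

lemma image_csr_line_of_coset:
  assumes \<xi>: "\<xi> \<in> csr_verts m n" and \<sigma>: "\<sigma> \<in> csr_verts m n"
    and ab: "a \<in> {1..m}" "b \<in> {1..m}" "a \<noteq> b" and pq: "p \<in> {1..m}" "q \<in> {1..m}" "p \<noteq> q"
    and img: "\<psi> ` coset n \<xi> (S_set n a b) = coset n \<sigma> (S_set n p q)"
  shows "\<psi> ` csr_line m n \<xi> {a, b} = csr_line m n (\<psi> \<xi>) {p, q}"
proof -
  have line: "\<psi> ` csr_line m n \<xi> {a, b} = csr_line m n \<sigma> {p, q}"
    using img coset_eq_csr_line[OF \<xi> ab] coset_eq_csr_line[OF \<sigma> pq] by simp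
  then have "\<psi> \<xi> \<in> csr_line m n \<sigma> {p, q}" using self_in_csr_line[OF \<xi>] by blast
  then show ?thesis using line csr_line_eq_if_mem[OF \<sigma>] by simp
qed

end

locale csr_line_map = csr_automorphism +
  fixes a b p q :: nat
  assumes n_ge_4: "4 \<le> n"
    and ab: "a \<in> {1..m}" "b \<in> {1..m}" "a \<noteq> b"
    and pq: "p \<in> {1..m}" "q \<in> {1..m}" "p \<noteq> q"
begin

definition maps_line :: "(nat \<Rightarrow> int) \<Rightarrow> bool" where
  "maps_line y \<longleftrightarrow> \<psi> ` csr_line m n y {a, b} = csr_line m n (\<psi> y) {p, q}"

lemma psi_in_csr_line:
  assumes "maps_line y" "v \<in> csr_line m n y {a, b}"
  shows "\<psi> v \<in> csr_line m n (\<psi> y) {p, q}"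
proof -
  have "\<psi> v \<in> \<psi> ` csr_line m n y {a, b}" using assms(2) by (rule imageI)
  then show ?thesis using assms(1) by (simp add: maps_line_def)
qed

lemma psi_notin_csr_line:
  assumes "maps_line y" "z \<in> csr_verts m n" "z \<notin> csr_line m n y {a, b}"
  shows "\<psi> z \<notin> csr_line m n (\<psi> y) {p, q}"
proof
  assume "\<psi> z \<in> csr_line m n (\<psi> y) {p, q}"
  then have "\<psi> z \<in> \<psi> ` csr_line m n y {a, b}" using assms(1) by (simp add: maps_line_def)
  then obtain x where x: "x \<in> csr_line m n y {a, b}" "\<psi> x = \<psi> z" by (rule imageE) simp
  then have "x = z" using psi_eq_iff assms(2) by (auto simp: csr_line_def)
  then show False using x(1) assms(3) by simp
qed

lemma maps_line_if_mem:
  assumes "y \<in> csr_verts m n" "maps_line y" "v \<in> csr_line m n y {a, b}"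
  shows "maps_line v"
  using assms csr_line_eq_if_mem[OF psi_vert[OF assms(1)] psi_in_csr_line[OF assms(2,3)]]
    csr_line_eq_if_mem[OF assms(1,3)]
  unfolding maps_line_def by simp

lemma image_of_neighbour_off_line:
  assumes y: "y \<in> csr_verts m n" "maps_line y" and e: "e \<in> {a, b}" and c: "c \<in> {1..m}" "c \<notin> {a, b}"
    and z: "z \<in> csr_verts m n" "diff_coords m y z = {e, c}" and v: "v \<in> csr_line m n y {a, b}"
  obtains i k where "i \<in> {p, q}" "k \<notin> {p, q}" "diff_coords m (\<psi> y) (\<psi> z) = {i, k}"
    "\<psi> z i = \<psi> v i \<longleftrightarrow> z e = v e"
proof -
  obtain f where f: "{a, b} = {e, f}" "f \<noteq> e" "f \<in> {1..m}" using e ab by auto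
  have e_m: "e \<in> {1..m}" using e ab by auto
  have ze: "z e \<in> {0..<int n}" using csr_vert_range[OF z(1) e_m] by simp
  have z_e: "z e \<noteq> y e" using mem_diff_coords[of e m y z] z(2) by auto
  define v' where "v' = move n y e f (z e)"
  have v'_line: "v' \<in> csr_line m n y {a, b}"
    unfolding v'_def f(1) using move_in_csr_line[OF y(1) e_m f(3) f(2)[symmetric] ze] .
  have v'V: "v' \<in> csr_verts m n" using v'_line by (simp add: csr_line_def)
  have v'_e: "v' e = z e" using f(2) by (simp add: v'_def move_same)
  have "csr_adj m v' z" unfolding v'_def using adj_move_to_neighbour[OF y(1) z f(3,2)] c(2) f(1) by auto
  then have adj_v'z: "csr_adj m (\<psi> v') (\<psi> z)" using psi_adj_iff v'V z(1) by blast
  have "csr_adj m y z" using z(2) c(2) e by (intro csr_adj_if_diff_coords_eq) auto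
  then have adj_yz: "csr_adj m (\<psi> y) (\<psi> z)" using psi_adj_iff y(1) z(1) by blast
  have "z \<notin> csr_line m n y {a, b}" using z(2) c(2) by (auto simp: csr_line_def)
  then have "\<psi> z \<notin> csr_line m n (\<psi> y) {p, q}" using psi_notin_csr_line y(2) z(1) by blast
  then have off: "\<not> diff_coords m (\<psi> y) (\<psi> z) \<subseteq> {p, q}" using psi_vert z(1) by (simp add: csr_line_def)
  have "\<psi> v' \<noteq> \<psi> y" using psi_eq_iff v'V y(1) v'_e z_e by auto
  then have Dv': "diff_coords m (\<psi> y) (\<psi> v') = {p, q}"
    using diff_coords_eq_if_csr_line[OF psi_vert[OF y(1)] psi_in_csr_line[OF y(2) v'_line]] by blast
  obtain i k where ik: "i \<in> {p, q}" "k \<notin> {p, q}" "diff_coords m (\<psi> y) (\<psi> z) = {i, k}"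
    "\<psi> z i = \<psi> v' i"
    using off_line_common_neighbour[OF Dv' pq(3) adj_yz adj_v'z off] .
  obtain j where j: "{p, q} = {i, j}" using ik(1) by blast
  have "\<psi> v' i = \<psi> v i \<longleftrightarrow> \<psi> v' = \<psi> v"
    using csr_line_coord_inj[of "\<psi> v'" "\<psi> y" i j "\<psi> v"] psi_in_csr_line[OF y(2)] v'_line v j by auto
  also have "\<dots> \<longleftrightarrow> v' = v" using psi_eq_iff v'V v by (auto simp: csr_line_def)
  also have "\<dots> \<longleftrightarrow> v' e = v e"
    using csr_line_coord_inj[of v' y e f v] v'_line v f(1) by auto
  finally show thesis using that ik v'_e by simp
qed

context
  fixes y u w v :: "nat \<Rightarrow> int" and c :: nat
  assumes y: "y \<in> csr_verts m n" "maps_line y"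
    and c: "c \<in> {1..m}" "c \<notin> {a, b}"
    and u: "u \<in> csr_verts m n" "diff_coords m y u = {a, c}"
    and w: "w \<in> csr_verts m n" "diff_coords m y w = {b, c}" "u c = w c"
    and v: "v \<in> csr_line m n y {a, b}" "v a = u a"
begin

lemma corner_line_point_not_adj:
  assumes z: "z \<in> csr_line m n y {a, c}" "z \<noteq> y" "z \<noteq> u"
  shows "z a \<noteq> u a" "z \<noteq> w" "\<not> csr_adj m z w"
proof -
  have u_line: "u \<in> csr_line m n y {a, c}" "u \<in> csr_line m n y {c, a}"
    using u by (auto simp: csr_line_def)
  have z_line: "z \<in> csr_line m n y {c, a}" using z(1) by (simp add: insert_commute)
  show "z a \<noteq> u a" using csr_line_coord_inj[OF z(1) u_line(1)] z(3) by blast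
  have zV: "z \<in> csr_verts m n" using z(1) by (simp add: csr_line_def)
  have Dz: "diff_coords m y z = {a, c}" using diff_coords_eq_if_csr_line[OF y(1) z(1)] z(2) by blast
  have "z a \<noteq> w a"
    using mem_diff_coords[of a m y z] Dz csr_verts_agree_outside[OF y(1) w(1), of "{b, c}" a] w(2)
      ab(3) c(2) by auto
  moreover have "z b \<noteq> w b"
    using mem_diff_coords[of b m y w] w(2) csr_verts_agree_outside[OF y(1) zV, of "{a, c}" b] Dz
      ab(3) c(2) by auto
  moreover have "z c \<noteq> w c" using csr_line_coord_inj[OF z_line u_line(2)] z(3) w(3) by auto
  ultimately have "{a, b, c} \<subseteq> diff_coords m z w" using ab c(1) by (auto simp: mem_diff_coords)
  then show "\<not> csr_adj m z w" using not_csr_adj_if_three_diffs[of a b c m z w] ab(3) c(2) by auto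
  show "z \<noteq> w" using \<open>z b \<noteq> w b\<close> by auto
qed

lemma corner_image_of_line_point:
  assumes i: "{p, q} = {i, i'}" "i \<noteq> i'" and k: "k \<notin> {p, q}"
    and Du: "diff_coords m (\<psi> y) (\<psi> u) = {i, k}" and Dw: "diff_coords m (\<psi> y) (\<psi> w) = {i, k}"
    and ui: "\<psi> u i = \<psi> v i"
    and z: "z \<in> csr_line m n y {a, c}" "z \<noteq> y" "z \<noteq> u"
  shows "\<psi> z \<in> csr_line m n (\<psi> y) {i', k} \<and> \<psi> z k = \<psi> u k"
proof -
  have zV: "z \<in> csr_verts m n" using z(1) by (simp add: csr_line_def)
  have Dz: "diff_coords m y z = {a, c}" using diff_coords_eq_if_csr_line[OF y(1) z(1)] z(2) by blast
  have a_mem: "a \<in> {a, b}" by simp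
  obtain j k' where j: "j \<in> {p, q}" "k' \<notin> {p, q}" "diff_coords m (\<psi> y) (\<psi> z) = {j, k'}"
      "\<psi> z j = \<psi> v j \<longleftrightarrow> z a = v a"
    using image_of_neighbour_off_line[OF y a_mem c zV Dz v(1)] .
  have zj: "\<psi> z j \<noteq> \<psi> v j" using j(4) v(2) corner_line_point_not_adj(1)[OF z] by simp
  have u_line: "u \<in> csr_line m n y {a, c}" using u by (auto simp: csr_line_def)
  have "csr_adj m u z" using csr_adj_if_same_line[OF u_line z(1)] z(3) c(2) by auto
  then have adj_uz: "csr_adj m (\<psi> u) (\<psi> z)" using psi_adj_iff u(1) zV by blast
  have not_adj_zw: "\<not> csr_adj m (\<psi> z) (\<psi> w)"
    using corner_line_point_not_adj(3)[OF z] psi_adj_iff zV w(1) by blast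
  have ne: "i \<noteq> k" "i' \<noteq> k" "i \<noteq> k'" "i' \<noteq> k'" using i k j(2) by auto
  show ?thesis
  proof (cases "j = i")
    case True
    have "\<psi> u i \<noteq> \<psi> z i" using ui zj True by simp
    then have "k' = k" using adj_neighbours_same_pivot[OF adj_uz Du] j(3) True ne(1,3) by simp
    then have "\<psi> z \<in> csr_line m n (\<psi> y) {i, k}" "\<psi> w \<in> csr_line m n (\<psi> y) {i, k}"
      using True j(3) Dw psi_vert zV w(1) by (auto simp: csr_line_def)
    moreover have "\<psi> z \<noteq> \<psi> w" using corner_line_point_not_adj(2)[OF z] psi_eq_iff zV w(1) by blast
    ultimately have "csr_adj m (\<psi> z) (\<psi> w)" using csr_adj_if_same_line ne(1) by blast
    then show ?thesis using not_adj_zw by contradiction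
  next
    case False
    then have "j = i'" using i j(1) by blast
    then have "k' = k" "diff_coords m (\<psi> u) (\<psi> z) = {i, i'}"
      using adj_neighbours_distinct_pivots[OF adj_uz Du j(3)] i(2) ne by auto
    moreover have "k \<in> {1..m}" using mem_diff_coords[of k m "\<psi> y" "\<psi> u"] Du by simp
    ultimately have "\<psi> z k = \<psi> u k" using mem_diff_coords[of k m "\<psi> u" "\<psi> z"] ne(1,2) by auto
    moreover have "\<psi> z \<in> csr_line m n (\<psi> y) {i', k}"
      using j(3) \<open>j = i'\<close> \<open>k' = k\<close> psi_vert zV by (simp add: csr_line_def)
    ultimately show ?thesis by simp
  qed
qed

text \<open>This is where \<open>n \<ge> 4\<close> is needed: the \<open>{a,c}\<close>-line through \<open>y\<close> and \<open>u\<close> has two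
  further points, but all of them would be mapped to the same vertex.\<close>
lemma corner_images_not_same_line:
  assumes i: "i \<in> {p, q}" and k: "k \<notin> {p, q}"
    and Du: "diff_coords m (\<psi> y) (\<psi> u) = {i, k}" and Dw: "diff_coords m (\<psi> y) (\<psi> w) = {i, k}"
    and ui: "\<psi> u i = \<psi> v i"
  shows False
proof -
  obtain i' where i': "{p, q} = {i, i'}" "i \<noteq> i'" using i pq(3) by blast
  have "a \<noteq> c" using c(2) by auto
  have "card {y, u} \<le> 2" by (simp add: card_insert_if)
  then have "2 \<le> card (csr_line m n y {a, c} - {y, u})"
    using diff_card_le_card_Diff[of "{y, u}" "csr_line m n y {a, c}", simplified] card_csr_line[OF y(1) ab(1) c(1) \<open>a \<noteq> c\<close>]
      n_ge_4 by linarith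
  then obtain T where T: "T \<subseteq> csr_line m n y {a, c} - {y, u}" "card T = 2"
    by (rule obtain_subset_with_card_n)
  then obtain z1 z2 where z: "T = {z1, z2}" "z1 \<noteq> z2" by (auto simp: card_2_iff)
  have img: "\<psi> z \<in> csr_line m n (\<psi> y) {k, i'} \<and> \<psi> z k = \<psi> u k" if "z \<in> T" for z
    using corner_image_of_line_point[OF i' k Du Dw ui] that T(1) by (auto simp: insert_commute)
  then have "\<psi> z1 = \<psi> z2"
    using csr_line_coord_inj[of "\<psi> z1" "\<psi> y" k i' "\<psi> z2"] z(1) by simp
  moreover have "z1 \<in> csr_verts m n" "z2 \<in> csr_verts m n" using T(1) z(1) by (auto simp: csr_line_def)
  ultimately show False using psi_eq_iff z(2) by blast
qed

lemma corner_image_in_csr_line: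
  assumes v': "v' \<in> csr_line m n y {a, b}" "v' b = w b" "v' \<noteq> v"
  shows "\<psi> w \<in> csr_line m n (\<psi> u) {p, q}"
proof -
  have ab_mem: "a \<in> {a, b}" "b \<in> {a, b}" by simp_all
  obtain i k where ik: "i \<in> {p, q}" "k \<notin> {p, q}" "diff_coords m (\<psi> y) (\<psi> u) = {i, k}"
      "\<psi> u i = \<psi> v i \<longleftrightarrow> u a = v a"
    using image_of_neighbour_off_line[OF y ab_mem(1) c u v(1)] .
  obtain j l where jl: "j \<in> {p, q}" "l \<notin> {p, q}" "diff_coords m (\<psi> y) (\<psi> w) = {j, l}"
      "\<psi> w j = \<psi> v' j \<longleftrightarrow> w b = v' b"
    using image_of_neighbour_off_line[OF y ab_mem(2) c w(1,2) v'(1)] .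
  obtain i' where i': "{p, q} = {i, i'}" "i \<noteq> i'" using ik(1) pq(3) by blast
  have "diff_coords m u w \<subseteq> {a, b, c}"
    using diff_coords_triangle[of m u w y] diff_coords_commute[of m y u] u(2) w(2) by auto
  moreover have "c \<notin> diff_coords m u w" using w(3) by (simp add: mem_diff_coords)
  moreover have "u \<noteq> w"
    using mem_diff_coords[of a m y u] u(2) csr_verts_agree_outside[OF y(1) w(1), of "{b, c}" a] w(2)
      ab(3) c(2) by auto
  ultimately have "csr_adj m u w" using csr_adj_if_diff_coords_subset[OF u(1) w(1)] ab(3) by blast
  then have adj_uw: "csr_adj m (\<psi> u) (\<psi> w)" using psi_adj_iff u(1) w(1) by blast
  have vV: "v \<in> csr_verts m n" "v' \<in> csr_verts m n" using v(1) v'(1) by (simp_all add: csr_line_def)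
  have "\<psi> v i \<noteq> \<psi> v' i"
    using csr_line_coord_inj[of "\<psi> v" "\<psi> y" i i' "\<psi> v'"] psi_in_csr_line[OF y(2)] v(1) v'(1) i'(1)
      psi_eq_iff vV v'(3) by auto
  have ne: "i \<noteq> k" "i \<noteq> l" "j \<noteq> k" "j \<noteq> l" using ik(1,2) jl(1,2) by auto
  have "j \<noteq> i"
  proof
    assume "j = i"
    then have "\<psi> u i \<noteq> \<psi> w i" using ik(4) jl(4) v(2) v'(2) \<open>\<psi> v i \<noteq> \<psi> v' i\<close> by simp
    then have "l = k" using adj_neighbours_same_pivot[OF adj_uw ik(3)] jl(3) \<open>j = i\<close> ne by simp
    then show False using corner_images_not_same_line[OF ik(1-3)] ik(4) v(2) jl(3) \<open>j = i\<close> by simp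
  qed
  then have "j = i'" using jl(1) i' by blast
  then have "diff_coords m (\<psi> u) (\<psi> w) = {i, i'}"
    using adj_neighbours_distinct_pivots[OF adj_uw ik(3) jl(3)] \<open>j \<noteq> i\<close> ne by auto
  then show ?thesis using i'(1) psi_vert w(1) by (simp add: csr_line_def)
qed

end

lemma mod_add_neq_mod_diff:
  fixes x d :: int
  assumes "(2 * d) mod int n \<noteq> 0"
  shows "(x + d) mod int n \<noteq> (x - d) mod int n"
proof
  assume "(x + d) mod int n = (x - d) mod int n"
  then have "int n dvd (x + d) - (x - d)" by (simp add: mod_eq_dvd_iff)
  then show False using assms by (simp add: dvd_eq_mod_eq_0)
qed

lemma psi_move_pair_in_csr_line:
  assumes y: "y \<in> csr_verts m n" "maps_line y" and c: "c \<in> {1..m}" "c \<notin> {a, b}"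
    and t: "t \<in> {0..<int n}" "(2 * (t - y c)) mod int n \<noteq> 0"
  shows "\<psi> (move n y c b t) \<in> csr_line m n (\<psi> (move n y c a t)) {p, q}"
proof -
  define u w where "u = move n y c a t" and "w = move n y c b t"
  have ca: "c \<noteq> a" "c \<noteq> b" using c(2) by auto
  have "t \<noteq> y c" using t(2) by auto
  have Du: "diff_coords m y u = {a, c}" and Dw: "diff_coords m y w = {b, c}"
    using diff_coords_move[OF y(1) c(1) ab(1) ca(1) t(1) \<open>t \<noteq> y c\<close>]
      diff_coords_move[OF y(1) c(1) ab(2) ca(2) t(1) \<open>t \<noteq> y c\<close>]
    by (auto simp: u_def w_def)
  have uV: "u \<in> csr_verts m n" and wV: "w \<in> csr_verts m n"
    using move_in_csr_line[OF y(1) c(1) ab(1) ca(1) t(1)] move_in_csr_line[OF y(1) c(1) ab(2) ca(2) t(1)]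
    by (simp_all add: u_def w_def csr_line_def)
  have uw_c: "u c = w c" using ca by (simp add: u_def w_def move_same)
  define v v' where "v = move n y a b (u a)" and "v' = move n y b a (w b)"
  have v: "v \<in> csr_line m n y {a, b}" "v a = u a"
    using move_in_csr_line[OF y(1) ab] csr_vert_range[OF uV ab(1)] ab(3) by (simp_all add: v_def move_same)
  have v': "v' \<in> csr_line m n y {a, b}" "v' b = w b"
    using move_in_csr_line[OF y(1) ab(2,1) ab(3)[symmetric]] csr_vert_range[OF wV ab(2)] ab(3)
    by (simp_all add: v'_def move_same insert_commute)
  have "v b = (y b + y a - (y a + y c - t) mod int n) mod int n"
    by (simp add: v_def u_def move_compensate)
  also have "\<dots> = (y b + y a - (y a + y c - t)) mod int n" by (rule mod_diff_right_eq)
  also have "y b + y a - (y a + y c - t) = y b + (t - y c)" by simp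
  finally have "v b = (y b + (t - y c)) mod int n" .
  moreover have "v' b = (y b - (t - y c)) mod int n"
    using v'(2) by (simp add: w_def move_compensate diff_diff_eq2)
  ultimately have "v' \<noteq> v" using mod_add_neq_mod_diff[OF t(2), of "y b"] by metis
  show ?thesis
    using corner_image_in_csr_line[OF y c uV Du wV Dw uw_c v v' \<open>v' \<noteq> v\<close>] by (simp add: u_def w_def)
qed

text \<open>With \<open>s = t - y c\<close>, the vertices \<open>w = y' + s(e\<^sub>a - e\<^sub>b)\<close> and
  \<open>w' = y' - s(e\<^sub>a - e\<^sub>b)\<close> below are distinct because \<open>2s \<noteq> 0\<close> mod \<open>n\<close>;
  \<open>psi_move_pair_in_csr_line\<close>, applied at \<open>y\<close> and at \<open>v\<close>, puts their images on the
  \<open>{p,q}\<close>-line through \<open>\<psi> y'\<close>.\<close>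
lemma maps_line_move_nondegenerate:
  assumes y: "y \<in> csr_verts m n" "maps_line y" and c: "c \<in> {1..m}" "c \<notin> {a, b}"
    and t: "t \<in> {0..<int n}" "(2 * (t - y c)) mod int n \<noteq> 0"
  shows "maps_line (move n y c a t)"
proof -
  define y' w where "y' = move n y c a t" and "w = move n y c b t"
  have ca: "c \<noteq> a" "c \<noteq> b" using c(2) by auto
  have "t \<noteq> y c" using t(2) by auto
  have y'_line: "y' \<in> csr_line m n y {c, a}" and w_line: "w \<in> csr_line m n y {c, b}"
    using move_in_csr_line[OF y(1) c(1) ab(1) ca(1) t(1)] move_in_csr_line[OF y(1) c(1) ab(2) ca(2) t(1)]
    by (simp_all add: y'_def w_def)
  have y'V: "y' \<in> csr_verts m n" and wV: "w \<in> csr_verts m n"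
    using y'_line w_line by (simp_all add: csr_line_def)
  define v where "v = move n y a b (y' a)"
  have v_line: "v \<in> csr_line m n y {a, b}"
    using move_in_csr_line[OF y(1) ab] csr_vert_range[OF y'V ab(1)] by (simp add: v_def)
  have vV: "v \<in> csr_verts m n" using v_line by (simp add: csr_line_def)
  have v_a: "v a = y' a" and v_c: "v c = y c" using ab(3) ca by (simp_all add: v_def move_same move_other)
  define w' where "w' = move n v c a t"
  have w'_line: "w' \<in> csr_line m n v {c, a}"
    using move_in_csr_line[OF vV c(1) ab(1) ca(1) t(1)] by (simp add: w'_def)
  have w'V: "w' \<in> csr_verts m n" using w'_line by (simp add: csr_line_def)
  have "diff_coords m v y' \<subseteq> {a, b, c}"
    using diff_coords_triangle[of m v y' y] diff_coords_commute[of m y v] v_line y'_line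
    by (auto simp: csr_line_def)
  moreover have "a \<notin> diff_coords m v y'" using v_a by (simp add: mem_diff_coords)
  ultimately have y'_line_v: "y' \<in> csr_line m n v {c, b}" using y'V by (auto simp: csr_line_def)
  have "move n v c b t = y'"
    using csr_line_coord_inj[OF move_in_csr_line[OF vV c(1) ab(2) ca(2) t(1)] y'_line_v] ca
    by (simp add: y'_def move_same)
  then have "\<psi> y' \<in> csr_line m n (\<psi> w') {p, q}"
    using psi_move_pair_in_csr_line[OF vV maps_line_if_mem[OF y v_line] c t(1)] t(2) v_c
    by (simp add: w'_def)
  then have img_w': "\<psi> w' \<in> csr_line m n (\<psi> y') {p, q}"
    using csr_line_commute psi_vert[OF w'V] by blast
  have img_w: "\<psi> w \<in> csr_line m n (\<psi> y') {p, q}"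
    using psi_move_pair_in_csr_line[OF y c t] by (simp add: y'_def w_def)
  have coord_c: "y' c = t" "w c = t" "w' c = t" using ca by (simp_all add: y'_def w_def w'_def move_same)
  have "diff_coords m y' w \<subseteq> {a, b, c}"
    using diff_coords_triangle[of m y' w y] diff_coords_commute[of m y y'] y'_line w_line
    by (auto simp: csr_line_def)
  moreover have "diff_coords m y' w' \<subseteq> {a, b, c}"
    using diff_coords_triangle[of m y' w' v] diff_coords_commute[of m v y'] y'_line_v w'_line
    by (auto simp: csr_line_def)
  moreover have "c \<notin> diff_coords m y' w" "c \<notin> diff_coords m y' w'"
    using coord_c by (simp_all add: mem_diff_coords)
  ultimately have "w \<in> csr_line m n y' {a, b}" "w' \<in> csr_line m n y' {a, b}"
    using wV w'V by (auto simp: csr_line_def)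
  moreover have "w \<noteq> y'"
  proof -
    have "diff_coords m y w = {c, b}"
      using diff_coords_move[OF y(1) c(1) ab(2) ca(2) t(1) \<open>t \<noteq> y c\<close>] by (simp add: w_def)
    then have "w b \<noteq> y b" using mem_diff_coords[of b m y w] by auto
    moreover have "y' b = y b" using ab(3) ca by (simp add: y'_def move_other)
    ultimately show ?thesis by auto
  qed
  moreover have "w' \<noteq> y'"
  proof -
    have "diff_coords m v w' = {c, a}"
      using diff_coords_move[OF vV c(1) ab(1) ca(1) t(1)] \<open>t \<noteq> y c\<close> v_c by (simp add: w'_def)
    then have "w' a \<noteq> v a" using mem_diff_coords[of a m v w'] by auto
    then show ?thesis using v_a by auto
  qed
  moreover have "w \<noteq> w'"
  proof -
    have "w' a = ((y a + y c - t) mod int n + y c - t) mod int n"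
      using v_a v_c by (simp add: w'_def y'_def move_compensate)
    also have "\<dots> = (y a + y c - t - (t - y c)) mod int n" by (metis add_diff_eq diff_diff_eq2 mod_add_left_eq)
    finally have "w' a = (y a + y c - t - (t - y c)) mod int n" .
    moreover have "w a = (y a + y c - t + (t - y c)) mod int n"
      using ab(3) ca csr_vert_mod[OF y(1)] by (simp add: w_def move_other)
    ultimately show ?thesis using mod_add_neq_mod_diff[OF t(2)] by metis
  qed
  ultimately show ?thesis
    using image_csr_line_eq_if_three[OF y'V ab pq _ _ _ _ _ img_w img_w'] by (simp add: y'_def maps_line_def)
qed

lemma maps_line_move:
  assumes y: "y \<in> csr_verts m n" "maps_line y" and c: "c \<in> {1..m}" "c \<notin> {a, b}"
    and t: "t \<in> {0..<int n}"
  shows "maps_line (move n y c a t)"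
proof (cases "(2 * (t - y c)) mod int n = 0")
  case False
  then show ?thesis using maps_line_move_nondegenerate[OF y c t] by blast
next
  case True
  \<comment> \<open>split the move into two nondegenerate ones through the value \<open>y c + 1\<close>\<close>
  have ca: "c \<noteq> a" using c(2) by auto
  define s where "s = (y c + 1) mod int n"
  have s: "s \<in> {0..<int n}" using n_pos by (simp add: s_def)
  have "(2 * (s - y c)) mod int n = (2 * (y c + 1 - y c)) mod int n"
    unfolding s_def by (metis mod_diff_left_eq mod_mult_right_eq)
  then have s2: "(2 * (s - y c)) mod int n = 2" using n_ge_4 by simp
  define y1 where "y1 = move n y c a s"
  have y1: "y1 \<in> csr_verts m n" "maps_line y1"
    using move_in_csr_line[OF y(1) c(1) ab(1) ca s] maps_line_move_nondegenerate[OF y c s] s2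
    by (simp_all add: y1_def csr_line_def)
  have "(2 * (t - y1 c)) mod int n \<noteq> 0"
  proof
    assume "(2 * (t - y1 c)) mod int n = 0"
    moreover have "y1 c = s" using ca by (simp add: y1_def move_same)
    ultimately have "int n dvd 2 * (t - s)" by (simp add: mod_0_imp_dvd)
    with mod_0_imp_dvd[OF True] have "int n dvd 2 * (t - y c) - 2 * (t - s)" by (rule dvd_diff)
    also have "2 * (t - y c) - 2 * (t - s) = 2 * (s - y c)" by (simp add: algebra_simps)
    finally show False using s2 by (simp add: dvd_eq_mod_eq_0)
  qed
  then have "maps_line (move n y1 c a t)" using maps_line_move_nondegenerate[OF y1 c t] by blast
  then show ?thesis by (simp add: y1_def move_move[OF ca])
qed

lemma maps_line_everywhere:
  assumes "x \<in> csr_verts m n" "maps_line x" "z \<in> csr_verts m n"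
  shows "maps_line z"
  using assms
proof (induction "card (diff_coords m x z - {a})" arbitrary: x rule: less_induct)
  case less
  show ?case
  proof (cases "diff_coords m x z \<subseteq> {a}")
    case True
    then have "x = z"
      using csr_verts_eq_iff diff_coords_neq_singleton less.prems(1,3) by (metis subset_singletonD)
    then show ?thesis using less.prems(2) by simp
  next
    case False
    then obtain l where l: "l \<in> diff_coords m x z" "l \<noteq> a" by blast
    have l_m: "l \<in> {1..m}" using l(1) by (simp add: mem_diff_coords)
    have zl: "z l \<in> {0..<int n}" using csr_vert_range[OF less.prems(3) l_m] by simp
    define x' where "x' = move n x l a (z l)"
    have x'_line: "x' \<in> csr_line m n x {l, a}"
      using move_in_csr_line[OF less.prems(1) l_m ab(1) l(2) zl] by (simp add: x'_def)
    then have x'V: "x' \<in> csr_verts m n" by (simp add: csr_line_def)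
    have "maps_line x'"
    proof (cases "l = b")
      case True
      then show ?thesis using maps_line_if_mem[OF less.prems(1,2)] x'_line by (simp add: insert_commute)
    next
      case False
      then show ?thesis using maps_line_move[OF less.prems(1,2) l_m] l(2) zl by (simp add: x'_def)
    qed
    have "x' j = (if j = l then z l else x j)" if "j \<noteq> a" for j
      using that l(2) by (simp add: x'_def move_same move_other)
    then have "diff_coords m x' z - {a} = (diff_coords m x z - {a}) - {l}"
      by (auto simp: mem_diff_coords split: if_splits)
    moreover have "card (diff_coords m x z - {a} - {l}) < card (diff_coords m x z - {a})"
      using l by (intro card_Diff1_less) auto
    ultimately have "card (diff_coords m x' z - {a}) < card (diff_coords m x z - {a})" by (simp only:)
    then show ?thesis using less.hyps x'V \<open>maps_line x'\<close> less.prems(3) by blast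
  qed
qed

end

theorem lemma4:
  fixes m n :: nat and \<psi> :: "(nat \<Rightarrow> int) \<Rightarrow> (nat \<Rightarrow> int)"
    and a b p q r s :: nat and \<xi> \<xi>' \<sigma> \<sigma>' :: "nat \<Rightarrow> int"
  assumes "n \<ge> 4" and "m > 3"
    and "csr_aut m n \<psi>"
    and "a \<in> {1..m}" "b \<in> {1..m}" "a \<noteq> b"
    and "\<xi> \<in> csr_verts m n" "\<xi>' \<in> csr_verts m n"
    and "\<sigma> \<in> csr_verts m n" "\<sigma>' \<in> csr_verts m n"
    and "p \<in> {1..m}" "q \<in> {1..m}" "p \<noteq> q"
    and "r \<in> {1..m}" "s \<in> {1..m}" "r \<noteq> s"
    and "\<psi> ` coset n \<xi> (S_set n a b) = coset n \<sigma> (S_set n p q)"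
    and "\<psi> ` coset n \<xi>' (S_set n a b) = coset n \<sigma>' (S_set n r s)"
  shows "{p, q} = {r, s}"
proof -
  interpret csr_line_map m n \<psi> a b p q
    using assms(1,3-6,11-13) by unfold_locales auto
  have "maps_line \<xi>"
    using image_csr_line_of_coset[OF assms(7,9,4-6,11-13,17)] by (simp add: maps_line_def)
  then have "maps_line \<xi>'" using maps_line_everywhere assms(7,8) by blast
  then have "csr_line m n (\<psi> \<xi>') {p, q} = csr_line m n (\<psi> \<xi>') {r, s}"
    using image_csr_line_of_coset[OF assms(8,10,4-6,14-16,18)] by (simp add: maps_line_def)
  then show ?thesis using csr_line_pair_eq[OF _ psi_vert[OF assms(8)] assms(11-13)] assms(1) by simp
qed

end
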